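(* Let $K\ge 1$ and let an instance of ring grooming be $K$-quasi-uniform, and let $d=\max_{j\ne k} d_{jk}$. Then the minimum number of ADMs satisfies $$m\ \ge\ \frac{(n^2-1)\sqrt{d/(2cK)}}{4}.$$
   Context: Ring grooming. An instance consists of integers $n\ge 2$ (ring size) and $c\ge 1$ (capacity), and a finite list $L$ of unordered pairs $\{j,k\}$ with $j\ne k$, $j,k\in\{1,\dots,n\}$ (repetitions allowed); these are the traffic demands. Let $d_{jk}=d_{kj}$ be the number of times $\{j,k\}$ occurs in $L$ (the traffic matrix; $d_{jj}=0$). Let $C_n$ be the cycle graph on vertices $1,\dots,n$ in cyclic order, with edges $\{l,l+1\}$ for $1\le l<n$ and $\{n,1\}$. A solution uses some finite number $r$ of "rings", each a copy of $C_n$ in which every edge has capacity $c$. A routing specifies, for every ring $i$ and every pair $j<k$, nonnegative integers $t^0_{ijk},t^1_{ijk}$: the amounts of $\{j,k\}$-traffic sent on ring $i$ along each of the two arcs of $C_n$ between $j$ and $k$. It is feasible if $\sum_i (t^0_{ijk}+t^1_{ijk})=d_{jk}$ for all $j<k$, and for every ring $i$ and every edge $e$ of $C_n$ the total traffic routed on ring $i$ along arcs containing $e$ is at most $c$. Ring $i$ needs an ADM (add/drop multiplexer) at vertex $j$ iff some traffic with endpoint $j$ is routed on ring $i$. The cost of a routing is the total number of ADMs, i.e. the number of pairs (ring $i$, vertex $j$) at which an ADM is needed. $m=m(n,c,L)$ denotes the minimum cost over all feasible routings. The instance is called $K$-quasi-uniform if $d_{jk}\ge 1$ for all $j\ne k$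 and $d_{jk}/d_{j'k'}\le K$ for all $j\ne k$, $j'\ne k'$. *)

theory Defs
  imports Complex_Main
begin

text \<open>Traffic demands: a list of unordered pairs, each represented as a 2-element set.\<close>

definition valid_instance :: "nat \<Rightarrow> nat \<Rightarrow> nat set list \<Rightarrow> bool" where
  "valid_instance n c L \<longleftrightarrow> n \<ge> 2 \<and> c \<ge> 1 \<and>
     (\<forall>p \<in> set L. card p = 2 \<and> p \<subseteq> {1..n})"

definition traffic :: "nat set list \<Rightarrow> nat \<Rightarrow> nat \<Rightarrow> nat" where
  "traffic L j k = (if j = k then 0 else length (filter (\<lambda>p. p = {j, k}) L))"

text \<open>Edges of C_n are indexed by l in {1..n}: edge l is {l, l+1} for l < n and {n,1} for l = n.
  For j < k, arc 0 between j and k is the path j, j+1, ..., k, containing exactly the edges l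
  with j \<le> l < k; arc 1 is the other arc, containing the remaining edges.\<close>
definition on_arc0 :: "nat \<Rightarrow> nat \<Rightarrow> nat \<Rightarrow> bool" where
  "on_arc0 j k l \<longleftrightarrow> j \<le> l \<and> l < k"

definition feasible_routing ::
  "nat \<Rightarrow> nat \<Rightarrow> nat set list \<Rightarrow> nat \<Rightarrow> (nat \<Rightarrow> nat \<Rightarrow> nat \<Rightarrow> nat) \<Rightarrow> (nat \<Rightarrow> nat \<Rightarrow> nat \<Rightarrow> nat) \<Rightarrow> bool"
  where
  "feasible_routing n c L r t0 t1 \<longleftrightarrow>
     (\<forall>j \<in> {1..n}. \<forall>k \<in> {1..n}. j < k \<longrightarrow>
        (\<Sum>i<r. t0 i j k + t1 i j k) = traffic L j k) \<and>
     (\<forall>i<r. \<forall>l \<in> {1..n}.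
        (\<Sum>(j, k) \<in> {(j, k). j \<in> {1..n} \<and> k \<in> {1..n} \<and> j < k}.
            (if on_arc0 j k l then t0 i j k else t1 i j k)) \<le> c)"

definition needs_adm ::
  "nat \<Rightarrow> (nat \<Rightarrow> nat \<Rightarrow> nat \<Rightarrow> nat) \<Rightarrow> (nat \<Rightarrow> nat \<Rightarrow> nat \<Rightarrow> nat) \<Rightarrow> nat \<Rightarrow> nat \<Rightarrow> bool" where
  "needs_adm n t0 t1 i j \<longleftrightarrow>
     (\<exists>k \<in> {1..n}. (j < k \<and> t0 i j k + t1 i j k > 0) \<or> (k < j \<and> t0 i k j + t1 i k j > 0))"

definition routing_cost ::
  "nat \<Rightarrow> nat \<Rightarrow> (nat \<Rightarrow> nat \<Rightarrow> nat \<Rightarrow> nat) \<Rightarrow> (nat \<Rightarrow> nat \<Rightarrow> nat \<Rightarrow> nat) \<Rightarrow> nat" where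
  "routing_cost n r t0 t1 = card {(i, j). i < r \<and> j \<in> {1..n} \<and> needs_adm n t0 t1 i j}"

definition min_adms :: "nat \<Rightarrow> nat \<Rightarrow> nat set list \<Rightarrow> nat" where
  "min_adms n c L = Inf {routing_cost n r t0 t1 | r t0 t1. feasible_routing n c L r t0 t1}"

definition quasi_uniform :: "real \<Rightarrow> nat \<Rightarrow> nat set list \<Rightarrow> bool" where
  "quasi_uniform K n L \<longleftrightarrow>
     (\<forall>j \<in> {1..n}. \<forall>k \<in> {1..n}. j \<noteq> k \<longrightarrow> traffic L j k \<ge> 1) \<and>
     (\<forall>j \<in> {1..n}. \<forall>k \<in> {1..n}. \<forall>j' \<in> {1..n}. \<forall>k' \<in> {1..n}.
        j \<noteq> k \<longrightarrow> j' \<noteq> k' \<longrightarrow> real (traffic L j k) / real (traffic L j' k') \<le> K)"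

definition max_traffic :: "nat \<Rightarrow> nat set list \<Rightarrow> nat" where
  "max_traffic n L = Max {traffic L j k | j k. j \<in> {1..n} \<and> k \<in> {1..n} \<and> j \<noteq> k}"

end

theory Submission
  imports Defs "HOL-Analysis.L2_Norm" "HOL-Analysis.Convex"
begin

(* Give the pair j < k the weight w = D (n - D) / n, where D = k - j.  Since w is at most the
   length of either arc between j and k, the w-weighted traffic on one ring is at most its total
   edge load n c.  A ring with a ADMs serves at most a^2/2 pairs, each of weight at most n/4, so
   by Cauchy-Schwarz the sum over pairs of w * sqrt(traffic on the ring) is at most
   n a sqrt(2c) / 4.  Summing over rings, subadditivity of sqrt bounds the left side below by
   sqrt(d/K) times the total weight n (n^2 - 1) / 12, which yields
   m >= (n^2 - 1) sqrt(d / (2 c K)) / 3. *)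

definition pairs :: "nat \<Rightarrow> (nat \<times> nat) set" where
  "pairs n = {(j, k). j \<in> {1..n} \<and> k \<in> {1..n} \<and> j < k}"

lemma finite_pairs [simp]: "finite (pairs n)"
  unfolding pairs_def by (rule finite_subset[of _ "{1..n} \<times> {1..n}"]) auto

lemma pairs_Suc: "pairs (Suc n) = pairs n \<union> (\<lambda>j. (j, Suc n)) ` {1..n}"
  unfolding pairs_def by (auto simp: le_Suc_eq)

definition dist_weight :: "nat \<Rightarrow> nat \<Rightarrow> real" where
  "dist_weight n d = real d * (real n - real d) / real n"

lemma dist_weight_nonneg: "d \<le> n \<Longrightarrow> 0 \<le> dist_weight n d"
  unfolding dist_weight_def by simp

lemma dist_weight_le:
  assumes "d \<le> n"
  shows "dist_weight n d \<le> real d" and "dist_weight n d \<le> real (n - d)"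
    and "dist_weight n d \<le> real n / 4"
proof -
  have "real d * (real n - real d) \<le> real d * real n"
    by (rule mult_left_mono) auto
  then show "dist_weight n d \<le> real d"
    unfolding dist_weight_def by (cases "n = 0") (simp_all add: divide_le_eq)
  have "real d * (real n - real d) \<le> real n * (real n - real d)"
    by (rule mult_right_mono) (use assms in auto)
  then show "dist_weight n d \<le> real (n - d)"
    unfolding dist_weight_def using assms
    by (cases "n = 0") (simp_all add: divide_le_eq mult.commute)
  have "4 * (real d * (real n - real d)) \<le> real n * real n"
    using zero_le_power2[of "real n - 2 * real d"] by (simp add: power2_eq_square algebra_simps)
  then show "dist_weight n d \<le> real n / 4"
    unfolding dist_weight_def by (cases "n = 0") (simp_all add: divide_le_eq field_simps)
qed

lemma sum_times_diff_atLeastAtMost: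
  "(\<Sum>d = 1..m. real d * (x - real d))
     = x * real m * (real m + 1) / 2 - real m * (real m + 1) * (2 * real m + 1) / 6"
  by (induction m) (simp_all add: field_simps)

lemma sum_pairs_dist_times_diff:
  "(\<Sum>(j, k)\<in>pairs n. real (k - j) * (x - real (k - j)))
     = x * (real n ^ 3 - real n) / 6 - real n ^ 2 * (real n ^ 2 - 1) / 12"
proof (induction n)
  case 0
  then show ?case by (simp add: pairs_def)
next
  case (Suc n)
  have "(\<Sum>(j, k)\<in>(\<lambda>j. (j, Suc n)) ` {1..n}. real (k - j) * (x - real (k - j)))
      = (\<Sum>j = 1..n. real (Suc n - j) * (x - real (Suc n - j)))"
    by (subst sum.reindex) (auto simp: inj_on_def)
  also have "\<dots> = (\<Sum>d = 1..n. real d * (x - real d))"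
    by (rule sum.reindex_bij_witness[of _ "\<lambda>d. Suc n - d" "\<lambda>j. Suc n - j"]) auto
  finally have last_column: "(\<Sum>(j, k)\<in>(\<lambda>j. (j, Suc n)) ` {1..n}. real (k - j) * (x - real (k - j)))
      = (\<Sum>d = 1..n. real d * (x - real d))" .
  have "pairs n \<inter> (\<lambda>j. (j, Suc n)) ` {1..n} = {}"
    by (auto simp: pairs_def)
  then have "(\<Sum>(j, k)\<in>pairs (Suc n). real (k - j) * (x - real (k - j)))
      = (\<Sum>(j, k)\<in>pairs n. real (k - j) * (x - real (k - j))) + (\<Sum>d = 1..n. real d * (x - real d))"
    unfolding pairs_Suc last_column[symmetric] by (simp add: sum.union_disjoint)
  then show ?case
    unfolding Suc.IH sum_times_diff_atLeastAtMost by (simp add: field_simps power2_eq_square power3_eq_cube)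
qed

lemma sum_pairs_dist_weight:
  "(\<Sum>(j, k)\<in>pairs n. dist_weight n (k - j)) = real n * (real n ^ 2 - 1) / 12"
proof (cases "n = 0")
  case False
  have "(\<Sum>(j, k)\<in>pairs n. dist_weight n (k - j))
      = (\<Sum>(j, k)\<in>pairs n. real (k - j) * (real n - real (k - j))) / real n"
    unfolding dist_weight_def by (simp add: sum_divide_distrib case_prod_beta)
  also have "\<dots> = real n * (real n ^ 2 - 1) / 12"
    unfolding sum_pairs_dist_times_diff using False
    by (simp add: field_simps power2_eq_square power3_eq_cube)
  finally show ?thesis .
qed (simp add: pairs_def)

lemma sum_if_on_arc0:
  assumes "j < k" "k \<le> n" "1 \<le> j"
  shows "(\<Sum>l = 1..n. if on_arc0 j k l then a else b) = a * (k - j) + b * (n - (k - j))"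
proof -
  have "{1..n} \<inter> {l. on_arc0 j k l} = {j..<k}" "{1..n} - {l. on_arc0 j k l} = {1..n} - {j..<k}"
    using assms by (auto simp: on_arc0_def)
  moreover have "card ({1..n} - {j..<k}) = n - (k - j)"
    using assms by (subst card_Diff_subset) auto
  ultimately show ?thesis
    by (simp add: sum.If_cases Diff_eq mult.commute)
qed

lemma weighted_ring_load_le:
  assumes "feasible_routing n c L r t0 t1" "i < r"
  shows "(\<Sum>(j, k)\<in>pairs n. dist_weight n (k - j) * real (t0 i j k + t1 i j k)) \<le> real n * real c"
proof -
  have "(\<Sum>(j, k)\<in>pairs n. dist_weight n (k - j) * real (t0 i j k + t1 i j k))
      \<le> (\<Sum>(j, k)\<in>pairs n. real (t0 i j k * (k - j) + t1 i j k * (n - (k - j))))"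
  proof (rule sum_mono, clarify)
    fix j k assume "(j, k) \<in> pairs n"
    then have "k - j \<le> n" by (auto simp: pairs_def)
    from dist_weight_le(1,2)[OF this]
    have "dist_weight n (k - j) * real (t0 i j k) + dist_weight n (k - j) * real (t1 i j k)
        \<le> real (k - j) * real (t0 i j k) + real (n - (k - j)) * real (t1 i j k)"
      by (intro add_mono mult_right_mono) auto
    then show "dist_weight n (k - j) * real (t0 i j k + t1 i j k)
        \<le> real (t0 i j k * (k - j) + t1 i j k * (n - (k - j)))"
      by (simp add: distrib_left mult.commute)
  qed
  also have "\<dots> = real (\<Sum>(j, k)\<in>pairs n. t0 i j k * (k - j) + t1 i j k * (n - (k - j)))"
    by (simp add: case_prod_beta)
  also have "(\<Sum>(j, k)\<in>pairs n. t0 i j k * (k - j) + t1 i j k * (n - (k - j)))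
      = (\<Sum>(j, k)\<in>pairs n. \<Sum>l = 1..n. if on_arc0 j k l then t0 i j k else t1 i j k)"
    by (intro sum.cong refl, clarify, subst sum_if_on_arc0) (auto simp: pairs_def)
  also have "\<dots> = real (\<Sum>l = 1..n. \<Sum>(j, k)\<in>pairs n. if on_arc0 j k l then t0 i j k else t1 i j k)"
    by (subst sum.swap) (simp add: case_prod_beta)
  also have "\<dots> \<le> real (\<Sum>l = 1..n. c)"
    using assms unfolding of_nat_le_iff feasible_routing_def pairs_def by (intro sum_mono) blast
  finally show ?thesis by simp
qed

definition adm_vertices ::
  "nat \<Rightarrow> (nat \<Rightarrow> nat \<Rightarrow> nat \<Rightarrow> nat) \<Rightarrow> (nat \<Rightarrow> nat \<Rightarrow> nat \<Rightarrow> nat) \<Rightarrow> nat \<Rightarrow> nat set" where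
  "adm_vertices n t0 t1 i = {j \<in> {1..n}. needs_adm n t0 t1 i j}"

lemma finite_adm_vertices [simp]: "finite (adm_vertices n t0 t1 i)"
  by (simp add: adm_vertices_def)

lemma routing_cost_eq_sum_card_adm_vertices:
  "routing_cost n r t0 t1 = (\<Sum>i<r. card (adm_vertices n t0 t1 i))"
proof -
  have "{(i, j). i < r \<and> j \<in> {1..n} \<and> needs_adm n t0 t1 i j} = (SIGMA i:{..<r}. adm_vertices n t0 t1 i)"
    by (auto simp: adm_vertices_def)
  then show ?thesis
    unfolding routing_cost_def by simp
qed

lemma card_ordered_pairs_le:
  fixes S :: "'a::linorder set"
  assumes "finite S"
  shows "2 * card {(x, y) \<in> S \<times> S. x < y} \<le> card S ^ 2"
proof -
  let ?T = "{(x, y) \<in> S \<times> S. x < y}"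
  have "finite ?T"
    by (rule finite_subset[of _ "S \<times> S"]) (auto simp: assms)
  then have "card ?T + card (prod.swap ` ?T) = card (?T \<union> prod.swap ` ?T)"
    by (intro card_Un_disjoint[symmetric]) auto
  also have "\<dots> \<le> card (S \<times> S)"
    by (rule card_mono) (auto simp: assms)
  finally have "card ?T + card (prod.swap ` ?T) \<le> card S * card S"
    by (simp add: card_cartesian_product)
  moreover have "card (prod.swap ` ?T) = card ?T"
    by (rule card_image) (simp add: inj_on_def)
  ultimately show ?thesis
    by (simp add: power2_eq_square)
qed

lemma card_used_pairs_le:
  "2 * card {(j, k) \<in> pairs n. 0 < t0 i j k + t1 i j k} \<le> card (adm_vertices n t0 t1 i) ^ 2"
proof -
  let ?A = "adm_vertices n t0 t1 i"
  have "{(j, k) \<in> pairs n. 0 < t0 i j k + t1 i j k} \<subseteq> {(j, k) \<in> ?A \<times> ?A. j < k}"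
    unfolding adm_vertices_def needs_adm_def pairs_def by auto
  then have "card {(j, k) \<in> pairs n. 0 < t0 i j k + t1 i j k} \<le> card {(j, k) \<in> ?A \<times> ?A. j < k}"
    by (rule card_mono[rotated]) (auto intro: finite_subset[of _ "?A \<times> ?A"])
  with card_ordered_pairs_le[of ?A] show ?thesis
    by simp
qed

lemma sum_weighted_sqrt_squared_le:
  fixes w f :: "'a \<Rightarrow> real"
  assumes "\<And>x. x \<in> A \<Longrightarrow> 0 \<le> w x" "\<And>x. x \<in> A \<Longrightarrow> 0 \<le> f x"
  shows "(\<Sum>x\<in>A. w x * sqrt (f x))\<^sup>2 \<le> (\<Sum>x\<in>A. w x * f x) * (\<Sum>x\<in>A. w x)"
proof -
  have "(\<Sum>x\<in>A. w x * sqrt (f x)) = (\<Sum>x\<in>A. sqrt (w x * f x) * sqrt (w x))"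
    using assms by (intro sum.cong) (simp_all add: real_sqrt_mult)
  moreover have "(\<Sum>x\<in>A. (sqrt (w x * f x))\<^sup>2) = (\<Sum>x\<in>A. w x * f x)"
    "(\<Sum>x\<in>A. (sqrt (w x))\<^sup>2) = (\<Sum>x\<in>A. w x)"
    using assms by (auto intro!: sum.cong)
  ultimately show ?thesis
    using Cauchy_Schwarz_ineq_sum[of "\<lambda>x. sqrt (w x * f x)" "\<lambda>x. sqrt (w x)" A] by simp
qed

lemma sqrt_sum_le_sum_sqrt:
  assumes "\<And>x. x \<in> A \<Longrightarrow> 0 \<le> f x"
  shows "sqrt (sum f A) \<le> (\<Sum>x\<in>A. sqrt (f x))"
proof -
  have "(\<Sum>x\<in>A. (sqrt (f x))\<^sup>2) = sum f A"
    using assms by (auto intro!: sum.cong)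
  then show ?thesis
    using L2_set_le_sum[of A "\<lambda>x. sqrt (f x)"] assms by (simp add: L2_set_def)
qed

lemma ring_weighted_sqrt_traffic_le:
  assumes "feasible_routing n c L r t0 t1" "i < r"
  shows "(\<Sum>(j, k)\<in>pairs n. dist_weight n (k - j) * sqrt (real (t0 i j k + t1 i j k)))
           \<le> real n * real (card (adm_vertices n t0 t1 i)) * sqrt (2 * real c) / 4"
proof -
  define w where "w = (\<lambda>(j, k). dist_weight n (k - j))"
  define \<tau> where "\<tau> = (\<lambda>(j, k). real (t0 i j k + t1 i j k))"
  define Q where "Q = {(j, k) \<in> pairs n. 0 < t0 i j k + t1 i j k}"
  define a where "a = real (card (adm_vertices n t0 t1 i))"
  have Q_sub: "Q \<subseteq> pairs n"
    by (auto simp: Q_def)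
  have w_bounds: "0 \<le> w p" "w p \<le> real n / 4" if "p \<in> pairs n" for p
    using that dist_weight_nonneg dist_weight_le(3) by (auto simp: w_def pairs_def)
  have \<tau>_nonneg: "0 \<le> \<tau> p" for p
    by (simp add: \<tau>_def case_prod_beta)
  have "(\<Sum>p\<in>Q. w p * \<tau> p) \<le> (\<Sum>p\<in>pairs n. w p * \<tau> p)"
    using Q_sub w_bounds \<tau>_nonneg by (intro sum_mono2) auto
  also have "\<dots> \<le> real n * real c"
    using weighted_ring_load_le[OF assms] by (simp add: w_def \<tau>_def case_prod_beta)
  finally have load: "(\<Sum>p\<in>Q. w p * \<tau> p) \<le> real n * real c" .
  have card_Q: "real (card Q) \<le> a\<^sup>2 / 2"
    using card_used_pairs_le[of n t0 i t1] unfolding Q_def a_def by (simp flip: of_nat_power)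
  have "(\<Sum>p\<in>Q. w p) \<le> real (card Q) * (real n / 4)"
    using sum_bounded_above[of Q w "real n / 4"] Q_sub w_bounds(2) by blast
  also have "\<dots> \<le> a\<^sup>2 / 2 * (real n / 4)"
    using card_Q by (intro mult_right_mono) auto
  finally have weight: "(\<Sum>p\<in>Q. w p) \<le> a\<^sup>2 * real n / 8"
    by simp
  have "(\<Sum>p\<in>Q. w p * sqrt (\<tau> p))\<^sup>2 \<le> (\<Sum>p\<in>Q. w p * \<tau> p) * (\<Sum>p\<in>Q. w p)"
    using Q_sub w_bounds(1) \<tau>_nonneg by (intro sum_weighted_sqrt_squared_le) auto
  also have "\<dots> \<le> (real n * real c) * (a\<^sup>2 * real n / 8)"
    using load weight Q_sub w_bounds by (intro mult_mono sum_nonneg) auto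
  also have "\<dots> = (real n * a * sqrt (2 * real c) / 4)\<^sup>2"
    by (simp add: power_mult_distrib power_divide power2_eq_square)
  finally have "(\<Sum>p\<in>Q. w p * sqrt (\<tau> p)) \<le> real n * a * sqrt (2 * real c) / 4"
    by (rule power2_le_imp_le) (simp add: a_def)
  moreover have "(\<Sum>p\<in>pairs n. w p * sqrt (\<tau> p)) = (\<Sum>p\<in>Q. w p * sqrt (\<tau> p))"
    using Q_sub by (intro sum.mono_neutral_right) (auto simp: Q_def \<tau>_def)
  ultimately show ?thesis
    by (simp add: w_def \<tau>_def a_def case_prod_beta)
qed

lemma max_traffic_le_quasi_uniform:
  assumes "n \<ge> 2" "quasi_uniform K n L" "j \<in> {1..n}" "k \<in> {1..n}" "j \<noteq> k"
  shows "real (max_traffic n L) \<le> K * real (traffic L j k)"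
proof -
  let ?M = "{traffic L j k | j k. j \<in> {1..n} \<and> k \<in> {1..n} \<and> j \<noteq> k}"
  have "?M \<subseteq> (\<lambda>(j, k). traffic L j k) ` ({1..n} \<times> {1..n})"
    by auto
  then have "finite ?M"
    by (rule finite_subset) simp
  moreover have "traffic L 1 2 \<in> ?M"
    using assms(1) by force
  then have "?M \<noteq> {}"
    by blast
  ultimately have "max_traffic n L \<in> ?M"
    unfolding max_traffic_def by (rule Max_in)
  then obtain j' k' where "max_traffic n L = traffic L j' k'" "j' \<in> {1..n}" "k' \<in> {1..n}" "j' \<noteq> k'"
    by blast
  moreover have "1 \<le> traffic L j k"
    using assms(2-5) unfolding quasi_uniform_def by blast
  moreover have "real (traffic L j' k') / real (traffic L j k) \<le> K" if "j' \<in> {1..n}" "k' \<in> {1..n}" "j' \<noteq> k'" for j' k'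
    using assms(2-5) that unfolding quasi_uniform_def by blast
  ultimately show ?thesis
    by (simp add: divide_le_eq)
qed

lemma ordered_pair_eq_if_doubleton_eq:
  fixes j k j' k' :: "'a::linorder"
  assumes "j < k" "j' < k'" "{j, k} = {j', k'}"
  shows "(j, k) = (j', k')"
  using assms by (auto simp: doubleton_eq_iff)

lemma feasible_routing_exists:
  assumes "1 \<le> c"
  shows "\<exists>r t0 t1. feasible_routing n c L r t0 t1"
proof -
  define t0 :: "nat \<Rightarrow> nat \<Rightarrow> nat \<Rightarrow> nat" where "t0 i j k = (if L ! i = {j, k} then 1 else 0)" for i j k
  define t1 :: "nat \<Rightarrow> nat \<Rightarrow> nat \<Rightarrow> nat" where "t1 i j k = 0" for i j k
  have demand: "(\<Sum>i<length L. t0 i j k + t1 i j k) = traffic L j k" if "j < k" for j k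
  proof -
    have "(\<Sum>i<length L. t0 i j k + t1 i j k) = card {i \<in> {..<length L}. L ! i = {j, k}}"
      by (simp add: t0_def t1_def sum.If_cases Int_def)
    also have "\<dots> = traffic L j k"
      using that by (simp add: traffic_def length_filter_conv_card)
    finally show ?thesis .
  qed
  have capacity: "(\<Sum>(j, k)\<in>pairs n. if on_arc0 j k l then t0 i j k else t1 i j k) \<le> c" for i l
  proof -
    have "(\<Sum>(j, k)\<in>pairs n. if on_arc0 j k l then t0 i j k else t1 i j k)
        \<le> (\<Sum>(j, k)\<in>pairs n. t0 i j k)"
      by (intro sum_mono) (auto simp: t1_def)
    also have "\<dots> = card {(j, k) \<in> pairs n. L ! i = {j, k}}"
      by (simp add: t0_def split_def sum.If_cases Int_def)
    also have "\<dots> \<le> 1"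
    proof -
      have "finite {(j, k) \<in> pairs n. L ! i = {j, k}}"
        by (rule rev_finite_subset[OF finite_pairs]) auto
      moreover have "p = p'"
        if "p \<in> {(j, k) \<in> pairs n. L ! i = {j, k}}" "p' \<in> {(j, k) \<in> pairs n. L ! i = {j, k}}" for p p'
        using that ordered_pair_eq_if_doubleton_eq by (fastforce simp: pairs_def)
      ultimately show ?thesis
        by (simp add: card_le_Suc0_iff_eq)
    qed
    finally show ?thesis
      using assms by linarith
  qed
  have "feasible_routing n c L (length L) t0 t1"
    unfolding feasible_routing_def using demand capacity by (auto simp: pairs_def)
  then show ?thesis
    by blast
qed

lemma routing_cost_lower_bound:
  assumes "valid_instance n c L" "0 < K" "quasi_uniform K n L"
    and feasible: "feasible_routing n c L r t0 t1"
  shows "(real n ^ 2 - 1) * sqrt (real (max_traffic n L) / (2 * real c * K)) / 3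
           \<le> real (routing_cost n r t0 t1)"
proof -
  have "2 \<le> n" "1 \<le> c"
    using assms(1) by (auto simp: valid_instance_def)
  define w where "w j k = dist_weight n (k - j)" for j k
  define \<tau> where "\<tau> i j k = real (t0 i j k + t1 i j k)" for i j k
  define q where "q = sqrt (real (max_traffic n L) / K)"
  define s where "s = sqrt (2 * real c) / 4"
  define cost where "cost = real (routing_cost n r t0 t1)"
  have w_nonneg: "0 \<le> w j k" if "(j, k) \<in> pairs n" for j k
    using that dist_weight_nonneg by (auto simp: w_def pairs_def)
  have traffic_bound: "q \<le> (\<Sum>i<r. sqrt (\<tau> i j k))" if "(j, k) \<in> pairs n" for j k
  proof -
    have "real (max_traffic n L) / K \<le> real (traffic L j k)"
      using max_traffic_le_quasi_uniform[OF \<open>2 \<le> n\<close> assms(3)] that assms(2)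
      by (auto simp: pairs_def divide_le_eq mult.commute)
    also have "\<dots> = (\<Sum>i<r. \<tau> i j k)"
    proof -
      have "(\<Sum>i<r. t0 i j k + t1 i j k) = traffic L j k"
        using feasible that unfolding feasible_routing_def pairs_def by blast
      then show ?thesis
        by (simp only: \<tau>_def of_nat_sum[symmetric])
    qed
    finally have "q \<le> sqrt (\<Sum>i<r. \<tau> i j k)"
      by (simp add: q_def)
    also have "\<dots> \<le> (\<Sum>i<r. sqrt (\<tau> i j k))"
      by (rule sqrt_sum_le_sum_sqrt) (simp add: \<tau>_def)
    finally show ?thesis .
  qed
  have "real n * (q * (real n ^ 2 - 1) / 12) = q * (\<Sum>(j, k)\<in>pairs n. w j k)"
    by (simp add: w_def sum_pairs_dist_weight)
  also have "\<dots> = (\<Sum>(j, k)\<in>pairs n. w j k * q)"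
    by (simp add: sum_distrib_left case_prod_beta mult.commute)
  also have "\<dots> \<le> (\<Sum>(j, k)\<in>pairs n. w j k * (\<Sum>i<r. sqrt (\<tau> i j k)))"
    using w_nonneg traffic_bound by (intro sum_mono) (auto intro: mult_left_mono)
  also have "\<dots> = (\<Sum>i<r. \<Sum>(j, k)\<in>pairs n. w j k * sqrt (\<tau> i j k))"
    by (subst sum.swap) (simp add: sum_distrib_left case_prod_beta)
  also have "\<dots> \<le> (\<Sum>i<r. real n * real (card (adm_vertices n t0 t1 i)) * s)"
    using ring_weighted_sqrt_traffic_le[OF feasible] by (intro sum_mono) (simp add: w_def \<tau>_def s_def)
  also have "\<dots> = real n * (s * cost)"
    by (simp add: cost_def routing_cost_eq_sum_card_adm_vertices sum_distrib_left sum_distrib_right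
        mult_ac)
  finally have "q * (real n ^ 2 - 1) / 12 \<le> s * cost"
    using \<open>2 \<le> n\<close> by simp
  moreover have "q = 4 * s * sqrt (real (max_traffic n L) / (2 * real c * K))"
    using \<open>1 \<le> c\<close> by (simp add: q_def s_def real_sqrt_divide real_sqrt_mult)
  then have "s * ((real n ^ 2 - 1) * sqrt (real (max_traffic n L) / (2 * real c * K)) / 3)
      = q * (real n ^ 2 - 1) / 12"
    by simp
  ultimately have "s * ((real n ^ 2 - 1) * sqrt (real (max_traffic n L) / (2 * real c * K)) / 3) \<le> s * cost"
    by linarith
  moreover have "0 < s"
    using \<open>1 \<le> c\<close> by (simp add: s_def)
  ultimately show ?thesis
    unfolding cost_def by (rule mult_left_le_imp_le)
qed

theorem corollary1:
  fixes n c :: nat and L :: "nat set list" and K :: real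
  assumes "valid_instance n c L"
    and "K \<ge> 1"
    and "quasi_uniform K n L"
  shows "real (min_adms n c L) \<ge>
           (real n ^ 2 - 1) * sqrt (real (max_traffic n L) / (2 * real c * K)) / 4"
proof -
  let ?costs = "{routing_cost n r t0 t1 | r t0 t1. feasible_routing n c L r t0 t1}"
  have "1 \<le> c"
    using assms(1) by (simp add: valid_instance_def)
  then obtain r0 t0' t1' where "feasible_routing n c L r0 t0' t1'"
    using feasible_routing_exists by blast
  then have "?costs \<noteq> {}"
    by blast
  then have "min_adms n c L \<in> ?costs"
    unfolding min_adms_def by (rule Inf_nat_def1)
  then obtain r t0 t1 where "feasible_routing n c L r t0 t1" "min_adms n c L = routing_cost n r t0 t1"
    by blast
  then have "(real n ^ 2 - 1) * sqrt (real (max_traffic n L) / (2 * real c * K)) / 3 \<le> real (min_adms n c L)"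
    using routing_cost_lower_bound[OF assms(1) _ assms(3)] assms(2) by simp
  moreover have "0 \<le> (real n ^ 2 - 1) * sqrt (real (max_traffic n L) / (2 * real c * K))"
    using assms(1,2) by (simp add: valid_instance_def)
  ultimately show ?thesis
    by linarith
qed

end
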